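(* For all integers $n\geq 1$ and $k\geq 0$, the map $\varphi$ is an involution on $A_{n,k}$, i.e. $\varphi(\varphi(\pi))=\pi$ for every $\pi\in A_{n,k}$.
   Context: For a permutation $\pi=\pi_1\cdots\pi_n$ of $[n]=\{1,\dots,n\}$, $\mathrm{des}(\pi)$ is the number of $m\in[n-1]$ with $\pi_m>\pi_{m+1}$, and $\mathrm{maxdrop}(\pi)=\max\{m-\pi_m:1\leq m\leq n\}$. $A_{n,k}$ is the set of permutations of $[n]$ with $\mathrm{maxdrop}(\pi)\leq k$. For a permutation $\sigma$ of $[n-1]$ and $1\leq r\leq n$, $\sigma\leftarrow r$ is the permutation of $[n]$ obtained by increasing every entry of $\sigma$ that is $\geq r$ by $1$ and then appending $r$ at the end. The map $\varphi:A_{n,k}\to A_{n,k}$ is defined recursively: $\varphi(1)=1$; for $n\geq 2$ and $\pi\in A_{n,k}$, let $i=\mathrm{des}(\pi)$, $j=\pi_n-n+k$, $i'=\lfloor((n+1)k-(k+1)i-j)/(k+1)\rfloor$, $j'=(n+1)k-(k+1)i-j-(k+1)i'$, let $\pi'$ be the permutation of $[n-1]$ order-isomorphic to $\pi_1\cdots\pi_{n-1}$, and set $\varphi(\pi)=\varphi(\pi')\leftarrow(n-k+j')$. *)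

theory Defs
  imports Main
begin

text \<open>Permutations of [n] are represented as lists pi = [pi_1, ..., pi_n] (entry pi_m is pi ! (m-1)).\<close>

definition is_perm :: "nat \<Rightarrow> nat list \<Rightarrow> bool" where
  "is_perm n p \<longleftrightarrow> length p = n \<and> distinct p \<and> set p = {1..n}"

definition des :: "nat list \<Rightarrow> nat" where
  "des p = card {m \<in> {1..<length p}. p ! (m - 1) > p ! m}"

definition maxdrop :: "nat list \<Rightarrow> int" where
  "maxdrop p = Max {int m - int (p ! (m - 1)) | m. m \<in> {1..length p}}"

definition A :: "nat \<Rightarrow> nat \<Rightarrow> nat list set" where
  "A n k = {p. is_perm n p \<and> maxdrop p \<le> int k}"

definition std :: "nat list \<Rightarrow> nat list" where
  "std xs = map (\<lambda>x. card {y \<in> set xs. y \<le> x}) xs"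

definition ins :: "nat list \<Rightarrow> nat \<Rightarrow> nat list" where
  "ins s r = map (\<lambda>x. if x \<ge> r then x + 1 else x) s @ [r]"

function phi :: "nat \<Rightarrow> nat list \<Rightarrow> nat list" where
  "phi k [] = []"
| "phi k [x] = [x]"
| "phi k (x # y # xs) =
     (let p = x # y # xs; n = int (length p); ki = int k;
          i = int (des p); j = int (last p) - n + ki;
          t = (n + 1) * ki - (ki + 1) * i - j;
          i' = t div (ki + 1); j' = t - (ki + 1) * i'
      in ins (phi k (std (butlast p))) (nat (n - ki + j')))"
  by pat_completeness auto
termination
  by (relation "measure (\<lambda>(k, p). length p)") (auto simp: std_def)

end

theory Submission
  imports Defs
begin

text \<open>Write \<open>t(\<pi>) = (n+1)k - (k+1) des \<pi> - (\<pi>\<^sub>n - n + k)\<close> for the quantity in the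
definition of \<open>\<phi>\<close>. By induction on \<open>n\<close>, \<open>\<phi>(\<pi>)\<close> is a permutation with
\<open>des \<phi>(\<pi>) = t div (k+1)\<close> and last entry \<open>n - k + t mod (k+1)\<close>: deleting the last entry
of \<open>\<pi>\<close> lowers \<open>t\<close> by less than \<open>k+1\<close>, so the new last entry of \<open>\<phi>(\<pi>)\<close> creates a
descent exactly when the remainder wraps around. Hence \<open>t(\<phi>(\<pi>)) = k(n+1) - t(\<pi>)\<close>, whose
remainder is \<open>\<pi>\<^sub>n - n + k\<close> because \<open>maxdrop \<pi> \<le> k\<close>; so \<open>\<phi>\<close> applied to \<open>\<phi>(\<pi>)\<close>
re-inserts \<open>\<pi>\<^sub>n\<close> on top of \<open>\<phi>(\<phi>(\<pi>')) = \<pi>'\<close>, where \<open>\<pi>'\<close> is the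
standardisation of \<open>\<pi>\<^sub>1\<dots>\<pi>\<^sub>n\<^sub>-\<^sub>1\<close>.\<close>

section \<open>Standardisation, descents and maximal drop\<close>

lemma std_map_strict_mono:
  fixes f :: "nat \<Rightarrow> nat"
  assumes "strict_mono_on (set xs) f"
  shows "std (map f xs) = std xs"
proof -
  have inj: "inj_on f (set xs)"
    using assms by (rule strict_mono_on_imp_inj_on)
  have "card {z \<in> set (map f xs). z \<le> f x} = card {y \<in> set xs. y \<le> x}" if "x \<in> set xs" for x
  proof -
    have "{z \<in> set (map f xs). z \<le> f x} = f ` {y \<in> set xs. y \<le> x}"
      using strict_mono_on_less_eq[OF assms _ that] by auto
    then show ?thesis
      using inj by (simp add: card_image inj_on_subset)
  qed
  then show ?thesis
    unfolding std_def by simp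
qed

lemma std_is_perm:
  assumes "is_perm n p"
  shows "std p = p"
proof -
  have "card {y \<in> set p. y \<le> x} = x" if "x \<in> set p" for x
  proof -
    have "{y \<in> set p. y \<le> x} = {1..x}"
      using assms that unfolding is_perm_def by auto
    then show ?thesis by simp
  qed
  then show ?thesis
    unfolding std_def by (simp add: map_idI)
qed

lemma des_snoc:
  assumes "xs \<noteq> []"
  shows "des (xs @ [y]) = des xs + (if y < last xs then 1 else 0)"
proof -
  let ?D = "\<lambda>zs. {m \<in> {1..<length zs}. zs ! (m - 1) > zs ! m}"
  have "?D (xs @ [y]) = ?D xs \<union> (if y < last xs then {length xs} else {})"
    using assms
    by (auto simp: nth_append last_conv_nth Suc_leI split: if_splits
        elim: less_SucE intro: Suc_leI)
  then show ?thesis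
    unfolding des_def by (auto simp: card_insert_if)
qed

lemma des_map_strict_mono:
  fixes f :: "nat \<Rightarrow> nat"
  assumes "strict_mono_on (set xs) f"
  shows "des (map f xs) = des xs"
proof -
  have "{m \<in> {1..<length xs}. map f xs ! (m - 1) > map f xs ! m}
      = {m \<in> {1..<length xs}. xs ! (m - 1) > xs ! m}"
    using strict_mono_on_less[OF assms] by auto
  then show ?thesis
    unfolding des_def by simp
qed

lemma strict_mono_on_rank:
  fixes xs :: "'a::linorder list"
  shows "strict_mono_on (set xs) (\<lambda>x. card {y \<in> set xs. y \<le> x})"
proof (rule strict_mono_onI)
  fix a b assume "a \<in> set xs" "b \<in> set xs" "a < b"
  then have "{y \<in> set xs. y \<le> a} \<subseteq> {y \<in> set xs. y \<le> b}"
    and "b \<in> {y \<in> set xs. y \<le> b} - {y \<in> set xs. y \<le> a}"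
    by auto
  then have "{y \<in> set xs. y \<le> a} \<subset> {y \<in> set xs. y \<le> b}"
    by blast
  then show "card {y \<in> set xs. y \<le> a} < card {y \<in> set xs. y \<le> b}"
    by (rule psubset_card_mono[rotated]) simp
qed

lemma des_std: "des (std xs) = des xs"
  unfolding std_def by (rule des_map_strict_mono[OF strict_mono_on_rank])

lemma maxdrop_le_iff:
  assumes "p \<noteq> []"
  shows "maxdrop p \<le> int k \<longleftrightarrow> (\<forall>i<length p. Suc i \<le> p ! i + k)"
proof -
  have "{int m - int (p ! (m - 1)) | m. m \<in> {1..length p}}
      = (\<lambda>i. int (Suc i) - int (p ! i)) ` {..<length p}"
  proof (intro set_eqI iffI)
    fix x assume "x \<in> {int m - int (p ! (m - 1)) | m. m \<in> {1..length p}}"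
    then obtain m where "m \<in> {1..length p}" "x = int m - int (p ! (m - 1))" by blast
    then show "x \<in> (\<lambda>i. int (Suc i) - int (p ! i)) ` {..<length p}"
      by (intro image_eqI[of _ _ "m - 1"]) auto
  next
    fix x assume "x \<in> (\<lambda>i. int (Suc i) - int (p ! i)) ` {..<length p}"
    then show "x \<in> {int m - int (p ! (m - 1)) | m. m \<in> {1..length p}}"
      by force
  qed
  moreover have "{..<length p} \<noteq> {}"
    using assms by (simp add: lessThan_empty_iff)
  ultimately have "maxdrop p \<le> int k \<longleftrightarrow> (\<forall>i<length p. int (Suc i) - int (p ! i) \<le> int k)"
    unfolding maxdrop_def by (subst Max_le_iff) auto
  moreover have "int (Suc i) - int (p ! i) \<le> int k \<longleftrightarrow> Suc i \<le> p ! i + k" for i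
    by linarith
  ultimately show ?thesis
    by presburger
qed

lemma in_A_iff:
  assumes "n \<ge> 1"
  shows "p \<in> A n k \<longleftrightarrow> is_perm n p \<and> (\<forall>i<n. Suc i \<le> p ! i + k)"
proof -
  have "is_perm n p \<Longrightarrow> p \<noteq> [] \<and> length p = n"
    using assms unfolding is_perm_def by auto
  then show ?thesis
    unfolding A_def using maxdrop_le_iff by auto
qed

lemma last_in_A:
  assumes "p \<in> A n k" "1 \<le> n"
  shows "1 \<le> last p" "last p \<le> n" "n \<le> last p + k"
proof -
  have p: "is_perm n p" "\<forall>i<n. Suc i \<le> p ! i + k"
    using assms in_A_iff[of n p k] by simp_all
  then have len: "length p = n"
    unfolding is_perm_def by simp
  then have last: "last p = p ! (n - 1)"
    using assms(2) last_conv_nth[of p] by (metis list.size(3) not_one_le_zero)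
  have "last p \<in> {1..n}"
    using p(1) len assms(2) unfolding last is_perm_def by auto
  then show "1 \<le> last p" "last p \<le> n"
    by simp_all
  show "n \<le> last p + k"
    using p(2)[rule_format, of "n - 1"] assms(2) unfolding last by simp
qed

section \<open>Inserting and deleting the last entry\<close>

lemma strict_mono_on_shift: "strict_mono_on S (\<lambda>x::nat. if r \<le> x then x + 1 else x)"
  by (rule strict_mono_onI) auto

definition unshift :: "nat \<Rightarrow> nat \<Rightarrow> nat" where
  "unshift b x = (if x < b then x else x - 1)"

lemma strict_mono_on_unshift: "strict_mono_on (- {b}) (unshift b)"
  by (rule strict_mono_onI) (auto simp: unshift_def)

lemma unshift_image:
  assumes "1 \<le> b" "b \<le> n"
  shows "unshift b ` ({1..n} - {b}) = {1..n - 1}"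
proof (intro set_eqI iffI)
  fix x assume "x \<in> unshift b ` ({1..n} - {b})"
  then show "x \<in> {1..n - 1}"
    using assms by (auto simp: unshift_def)
next
  fix x assume x: "x \<in> {1..n - 1}"
  show "x \<in> unshift b ` ({1..n} - {b})"
  proof (cases "x < b")
    case True
    then show ?thesis using x by (auto simp: unshift_def intro!: image_eqI[of x _ x])
  next
    case False
    then show ?thesis using x assms by (auto simp: unshift_def intro!: image_eqI[of x _ "x + 1"])
  qed
qed

lemma ins_map_unshift:
  assumes "b \<notin> set xs"
  shows "ins (map (unshift b) xs) b = xs @ [b]"
  using assms unfolding ins_def unshift_def by (induction xs) auto

lemma ins_is_perm:
  assumes "is_perm (n - 1) s" "1 \<le> r" "r \<le> n"
  shows "is_perm n (ins s r)"
proof -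
  let ?shift = "\<lambda>x. if r \<le> x then x + 1 else x"
  have image: "?shift ` {1..n - 1} = {1..n} - {r}"
  proof (intro set_eqI iffI)
    fix x assume "x \<in> ?shift ` {1..n - 1}"
    then show "x \<in> {1..n} - {r}"
      using assms(2,3) by auto
  next
    fix x assume x: "x \<in> {1..n} - {r}"
    have "unshift r x \<in> {1..n - 1}"
      using imageI[OF x, of "unshift r"] unshift_image[OF assms(2,3)] by (simp only:)
    moreover have "x = ?shift (unshift r x)"
      using x by (auto simp: unshift_def)
    ultimately show "x \<in> ?shift ` {1..n - 1}"
      by (rule image_eqI[rotated])
  qed
  have s: "length s = n - 1" "distinct s" "set s = {1..n - 1}"
    using assms(1) unfolding is_perm_def by simp_all
  have "inj_on ?shift (set s)"
    using strict_mono_on_shift by (rule strict_mono_on_imp_inj_on)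
  then have "distinct (map ?shift s)"
    using s(2) by (simp add: distinct_map)
  moreover have "set (map ?shift s) = {1..n} - {r}"
    by (simp only: set_map s(3) image)
  moreover have "insert r ({1..n} - {r}) = {1..n}"
    using assms(2,3) by (simp add: insert_absorb)
  ultimately show ?thesis
    using s(1) assms(2,3) unfolding is_perm_def ins_def by simp
qed

lemma std_butlast_ins:
  assumes "is_perm m s"
  shows "std (butlast (ins s r)) = s"
  using std_map_strict_mono[OF strict_mono_on_shift] std_is_perm[OF assms]
  by (simp add: ins_def)

lemma des_ins:
  assumes "s \<noteq> []"
  shows "des (ins s r) = des s + (if r \<le> last s then 1 else 0)"
  using assms des_snoc des_map_strict_mono[OF strict_mono_on_shift]
  by (simp add: ins_def last_map)

lemma set_butlast_perm:
  assumes "is_perm n p" "p \<noteq> []"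
  shows "distinct (butlast p)" "set (butlast p) = {1..n} - {last p}"
proof -
  have p: "p = butlast p @ [last p]"
    using assms(2) by simp
  from assms(1) have "distinct (butlast p @ [last p])" "set (butlast p @ [last p]) = {1..n}"
    unfolding is_perm_def by (metis p)+
  then show "distinct (butlast p)" "set (butlast p) = {1..n} - {last p}"
    by auto
qed

lemma std_butlast_eq_map_unshift:
  assumes "is_perm n p" "p \<noteq> []"
  shows "std (butlast p) = map (unshift (last p)) (butlast p)"
    and "is_perm (n - 1) (std (butlast p))"
proof -
  let ?b = "last p"
  have b: "1 \<le> ?b" "?b \<le> n"
    using assms last_in_set[OF assms(2)] unfolding is_perm_def by auto
  have mono: "strict_mono_on (set (butlast p)) (unshift ?b)"
    using monotone_on_subset[OF strict_mono_on_unshift] set_butlast_perm(2)[OF assms]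
    by blast
  have "is_perm (n - 1) (map (unshift ?b) (butlast p))"
    using assms set_butlast_perm[OF assms] unshift_image[OF b]
      strict_mono_on_imp_inj_on[OF mono]
    unfolding is_perm_def by (auto simp: distinct_map)
  moreover have "std (butlast p) = map (unshift ?b) (butlast p)"
    using std_map_strict_mono[OF mono] std_is_perm[OF calculation] by simp
  ultimately show "std (butlast p) = map (unshift ?b) (butlast p)"
    and "is_perm (n - 1) (std (butlast p))"
    by simp_all
qed

lemma ins_std_butlast_last:
  assumes "is_perm n p" "p \<noteq> []"
  shows "ins (std (butlast p)) (last p) = p"
  using ins_map_unshift[of "last p" "butlast p"] std_butlast_eq_map_unshift(1)[OF assms]
    set_butlast_perm(2)[OF assms] assms(2)
  by simp

lemma std_butlast_in_A:
  assumes "p \<in> A n k" "2 \<le> n"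
  shows "std (butlast p) \<in> A (n - 1) k"
proof -
  have p: "is_perm n p" "\<forall>i<n. Suc i \<le> p ! i + k"
    using assms in_A_iff[of n p k] by simp_all
  have len: "length p = n" and dist: "distinct p"
    using p(1) unfolding is_perm_def by simp_all
  then have ne: "p \<noteq> []"
    using assms(2) by auto
  define b where "b = last p"
  have b: "b = p ! (n - 1)" "n \<le> b + k"
    using p(2)[rule_format, of "n - 1"] len ne assms(2) unfolding b_def by (simp_all add: last_conv_nth)
  have "Suc i \<le> std (butlast p) ! i + k" if i: "i < n - 1" for i
  proof -
    have entry: "std (butlast p) ! i = unshift b (p ! i)"
      using std_butlast_eq_map_unshift(1)[OF p(1) ne] i len by (simp add: nth_butlast b_def)
    have "p ! i \<noteq> b"
      using dist i len unfolding b(1) by (simp add: nth_eq_iff_index_eq)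
    then show ?thesis
      using entry p(2) i b(2) by (auto simp: unshift_def)
  qed
  then show ?thesis
    using in_A_iff[of "n - 1"] std_butlast_eq_map_unshift(2)[OF p(1) ne] assms(2) by simp
qed

section \<open>The involution\<close>

text \<open>This is \<open>t = (n+1)k - (k+1)i - j\<close> from the definition of \<open>phi\<close>, with
\<open>i = des p\<close> and \<open>j = last p - n + k\<close>.\<close>

definition phi_t :: "nat \<Rightarrow> nat list \<Rightarrow> int" where
  "phi_t k p = (int k + 1) * (int (length p) - int (des p)) - int (last p)"

lemma phi_step:
  assumes "2 \<le> length p"
  shows "phi k p = ins (phi k (std (butlast p)))
    (nat (int (length p) - int k + phi_t k p mod (int k + 1)))"
proof -
  obtain x y xs where p: "p = x # y # xs"
    using assms by (metis One_nat_def Suc_1 Suc_le_length_iff)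
  have "(int (length p) + 1) * int k - (int k + 1) * int (des p)
      - (int (last p) - int (length p) + int k) = phi_t k p"
    unfolding phi_t_def by (simp add: algebra_simps)
  then show ?thesis
    unfolding p by (simp only: phi.simps Let_def minus_mult_div_eq_mod)
qed

lemma div_add_carry:
  fixes T e K :: int
  assumes "0 \<le> e" "e < K"
  shows "(T + e) div K = T div K + (if (T + e) mod K < T mod K then 1 else 0)"
proof -
  have K: "K > 0"
    using assms by simp
  define r where "r = T mod K"
  have r: "0 \<le> r" "r < K"
    unfolding r_def using K by simp_all
  have div_eq: "(T + e) div K = T div K + (r + e) div K"
    using div_add1_eq[of T e K] assms unfolding r_def by simp
  have mod_eq: "(T + e) mod K = (r + e) mod K"
    unfolding r_def by (simp add: mod_add_left_eq)
  show ?thesis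
  proof (cases "r + e < K")
    case True
    then show ?thesis
      using div_eq mod_eq assms r by (simp add: r_def)
  next
    case False
    define d where "d = r + e - K"
    have d: "0 \<le> d" "d < K" "d < r" "r + e = d + K"
      using False assms r unfolding d_def by auto
    have "(r + e) div K = 1" "(r + e) mod K = d"
      using d K by (simp_all add: div_add_self2)
    then show ?thesis
      using div_eq mod_eq d(3) by (simp add: r_def)
  qed
qed

lemma phi_t_std_butlast:
  assumes "p \<in> A n k" "2 \<le> n"
  shows "phi_t k (std (butlast p)) \<le> phi_t k p"
    and "phi_t k p < phi_t k (std (butlast p)) + (int k + 1)"
proof -
  have p: "is_perm n p" "\<forall>i<n. Suc i \<le> p ! i + k"
    using assms in_A_iff[of n p k] by simp_all
  have len: "length p = n" and dist: "distinct p"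
    using p(1) unfolding is_perm_def by simp_all
  then have ne: "p \<noteq> []" "butlast p \<noteq> []"
    using assms(2) by (auto simp flip: length_0_conv)
  define a where "a = last (butlast p)"
  define b where "b = last p"
  have ab: "a = p ! (n - 2)" "b = p ! (n - 1)"
    using ne len assms(2) unfolding a_def b_def by (simp_all add: last_conv_nth nth_butlast numeral_2_eq_2)
  have "a \<noteq> b"
    using dist len assms(2) unfolding ab by (simp add: nth_eq_iff_index_eq)
  moreover have "a \<le> n" "b \<le> n" "n - 1 \<le> a + k" "n \<le> b + k"
    using p len assms(2) nth_mem[of "n - 2" p] nth_mem[of "n - 1" p] unfolding ab is_perm_def
    by (auto dest: spec[of _ "n - 2"] spec[of _ "n - 1"])
  moreover have "des p = des (butlast p) + (if b < a then 1 else 0)"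
    using des_snoc[OF ne(2), of b] ne(1) unfolding a_def b_def by simp
  moreover have "last (std (butlast p)) = unshift b a"
    using std_butlast_eq_map_unshift(1)[OF p(1) ne(1)] ne(2) unfolding a_def b_def
    by (simp add: last_map)
  moreover have "length (std (butlast p)) = n - 1"
    using std_butlast_eq_map_unshift(2)[OF p(1) ne(1)] unfolding is_perm_def by simp
  ultimately show "phi_t k (std (butlast p)) \<le> phi_t k p"
    and "phi_t k p < phi_t k (std (butlast p)) + (int k + 1)"
    using assms(2) len unfolding b_def by (auto simp: phi_t_def des_std unshift_def algebra_simps)
qed

lemma phi_t_mod_bounds:
  assumes "p \<in> A n k" "1 \<le> n"
  shows "1 \<le> int n - int k + phi_t k p mod (int k + 1)"
    and "int n - int k + phi_t k p mod (int k + 1) \<le> int n"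
proof -
  let ?K = "int k + 1"
  note b = last_in_A[OF assms]
  have mod_eq: "phi_t k p mod ?K = (- int (last p)) mod ?K"
    unfolding phi_t_def by (simp add: mod_diff_left_eq[symmetric])
  show "1 \<le> int n - int k + phi_t k p mod ?K"
  proof (cases "k < n")
    case True
    then show ?thesis
      using pos_mod_sign[of ?K "phi_t k p"] by linarith
  next
    case False
    have "(- int (last p)) mod ?K = (?K - int (last p)) mod ?K"
      by (simp add: mod_diff_left_eq[of ?K])
    also have "\<dots> = ?K - int (last p)"
      using False b by (intro mod_pos_pos_trivial) auto
    finally have "(- int (last p)) mod ?K = ?K - int (last p)" .
    then show ?thesis
      using mod_eq b by simp
  qed
  show "int n - int k + phi_t k p mod ?K \<le> int n"
    using pos_mod_bound[of ?K "phi_t k p"] by linarith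
qed

lemma phi_t_eq_complement:
  assumes "length q = n"
    and "int (des q) = T div (int k + 1)"
    and "int (last q) = int n - int k + T mod (int k + 1)"
  shows "phi_t k q = int k * (int n + 1) - T"
proof -
  have "T = (int k + 1) * (T div (int k + 1)) + T mod (int k + 1)"
    by simp
  then show ?thesis
    unfolding phi_t_def using assms by (simp add: algebra_simps)
qed

lemma complement_phi_t_mod:
  assumes "p \<in> A n k" "1 \<le> n"
  shows "(int k * (int n + 1) - phi_t k p) mod (int k + 1) = int (last p) + int k - int n"
proof -
  have len: "length p = n"
    using assms unfolding A_def is_perm_def by simp
  have "int k * (int n + 1) - phi_t k p = (int k + 1) * int (des p) + (int (last p) + int k - int n)"
    unfolding phi_t_def len by (simp add: algebra_simps)
  then show ?thesis
    using last_in_A[OF assms] by simp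
qed

lemma des_ins_carry:
  fixes T T' :: int
  assumes "s \<noteq> []"
    and "int (des s) = T' div (int k + 1)"
    and "int (last s) = int n - int k + T' mod (int k + 1)"
    and "int r = int n + 1 - int k + T mod (int k + 1)"
    and "T' \<le> T" "T < T' + (int k + 1)"
  shows "int (des (ins s r)) = T div (int k + 1)"
proof -
  let ?K = "int k + 1"
  have "r \<le> last s \<longleftrightarrow> T mod ?K < T' mod ?K"
    using assms(3,4) by linarith
  then have "int (des (ins s r)) = T' div ?K + (if T mod ?K < T' mod ?K then 1 else 0)"
    using des_ins[OF assms(1), of r] assms(2) by simp
  also have "\<dots> = T div ?K"
    using div_add_carry[of "T - T'" ?K T'] assms(5,6) by simp
  finally show ?thesis .
qed

lemma phi_invariants:
  assumes "p \<in> A n k" "1 \<le> n"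
  shows "is_perm n (phi k p)
    \<and> int (des (phi k p)) = phi_t k p div (int k + 1)
    \<and> int (last (phi k p)) = int n - int k + phi_t k p mod (int k + 1)
    \<and> phi k (phi k p) = p"
  using assms(2,1)
proof (induction n arbitrary: p rule: nat_induct_at_least)
  case base
  then have "length p = 1" "set p = {1}"
    unfolding A_def is_perm_def by simp_all
  then have "p = [1]"
    by (cases p) auto
  moreover have "des [1] = 0"
    unfolding des_def by simp
  ultimately show ?case
    by (simp add: phi_t_def is_perm_def)
next
  case (Suc n)
  let ?K = "int k + 1"
  define p' where "p' = std (butlast p)"
  define r where "r = nat (int (Suc n) - int k + phi_t k p mod ?K)"
  have perm: "is_perm (Suc n) p" and len: "length p = Suc n"
    using Suc.prems unfolding A_def is_perm_def by simp_all
  have "p' \<in> A n k"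
    using std_butlast_in_A[OF Suc.prems] Suc.hyps unfolding p'_def by simp
  note IH = Suc.IH[OF this]
  have r: "int r = int (Suc n) - int k + phi_t k p mod ?K" "1 \<le> r" "r \<le> Suc n"
    using phi_t_mod_bounds[OF Suc.prems] unfolding r_def by auto
  have phi_p: "phi k p = ins (phi k p') r"
    using phi_step[of p k] len Suc.hyps unfolding p'_def r_def by simp
  have perm_phi: "is_perm (Suc n) (phi k p)"
    using ins_is_perm[of "Suc n" "phi k p'" r] IH r(2,3) unfolding phi_p by simp
  have last_phi: "last (phi k p) = r"
    unfolding phi_p ins_def by simp
  have des_phi: "int (des (phi k p)) = phi_t k p div ?K"
    unfolding phi_p
    by (rule des_ins_carry[where T' = "phi_t k p'" and n = n])
      (use IH r(1) phi_t_std_butlast[OF Suc.prems] Suc.hyps in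
        \<open>auto simp: p'_def is_perm_def\<close>)
  have "phi k (phi k p) = ins (phi k (phi k p')) (last p)"
  proof -
    have "phi_t k (phi k p) = int k * (int (Suc n) + 1) - phi_t k p"
      using perm_phi des_phi last_phi r(1)
      by (intro phi_t_eq_complement) (simp_all add: is_perm_def)
    then have "int (Suc n) - int k + phi_t k (phi k p) mod ?K = int (last p)"
      using complement_phi_t_mod[OF Suc.prems] by simp
    then show ?thesis
      using phi_step[of "phi k p" k] perm_phi Suc.hyps std_butlast_ins[of n "phi k p'" r] IH
      unfolding phi_p is_perm_def by simp
  qed
  also have "\<dots> = p"
    using IH ins_std_butlast_last[OF perm] len unfolding p'_def by force
  finally show ?case
    using perm_phi des_phi last_phi r(1) by simp
qed

theorem lemma2p3:
  fixes n k :: nat and p :: "nat list"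
  assumes "n \<ge> 1" and "p \<in> A n k"
  shows "phi k (phi k p) = p"
  using phi_invariants[OF assms(2,1)] by simp

end
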